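(* Let $X$ be a real Hilbert space, let $\rho>-1$ and let $A\colon X\rightrightarrows X$ be maximally $\rho$-comonotone. Then $\operatorname{ran}(\mathrm{Id}+A^{-1})=X$.
   Context: For $A\colon X\rightrightarrows X$, $A^{-1}$ is defined by $\operatorname{gra}A^{-1}=\{(u,x):(x,u)\in\operatorname{gra}A\}$. For $\rho\in\mathbb R$, $A$ is $\rho$-comonotone if $\langle x-y,u-v\rangle\ge\rho\|u-v\|^2$ for all $(x,u),(y,v)\in\operatorname{gra}A$; maximally $\rho$-comonotone if moreover no $\rho$-comonotone operator has a graph properly containing $\operatorname{gra}A$. *)

theory Defs
  imports "HOL-Analysis.Analysis"
begin

text \<open>A set-valued operator A on X is represented by its graph, a set of pairs (x,u) with u in A x.\<close>

definition inv_op :: "('a \<times> 'a) set \<Rightarrow> ('a \<times> 'a) set" where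
  "inv_op A = {(u, x). (x, u) \<in> A}"

definition comonotone :: "real \<Rightarrow> ('a::real_inner \<times> 'a) set \<Rightarrow> bool" where
  "comonotone \<rho> A \<longleftrightarrow>
     (\<forall>x u y v. (x, u) \<in> A \<longrightarrow> (y, v) \<in> A \<longrightarrow> inner (x - y) (u - v) \<ge> \<rho> * (norm (u - v))\<^sup>2)"

definition max_comonotone :: "real \<Rightarrow> ('a::real_inner \<times> 'a) set \<Rightarrow> bool" where
  "max_comonotone \<rho> A \<longleftrightarrow> comonotone \<rho> A \<and> (\<forall>B. comonotone \<rho> B \<longrightarrow> A \<subseteq> B \<longrightarrow> B = A)"

definition ran_id_plus :: "('a::real_vector \<times> 'a) set \<Rightarrow> 'a set" where
  "ran_id_plus A = {x + u | x u. (x, u) \<in> A}"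

end

theory Submission
  imports Defs "HOL-Real_Asymp.Real_Asymp"
begin

text \<open>Fix \<open>z\<close>. By maximality, \<open>(z - p, p)\<close> belongs to \<open>A\<close>, and then \<open>z \<in> ran (Id + A\<inverse>)\<close>, as soon
  as it satisfies the \<open>\<rho>\<close>-comonotonicity inequality against every \<open>g \<in> A\<close>. For a fixed \<open>g\<close> this
  inequality says that a quadratic function of \<open>p\<close> with leading coefficient \<open>1 + \<rho> > 0\<close> is
  nonpositive, so the admissible \<open>p\<close> form a closed, convex, bounded set \<open>K g\<close>.

  Finitely many \<open>K g\<close> intersect by a minimax argument: for any convex weights the averaged
  inequality holds at the barycentre of the second components, because Huygens' identity turns the
  average into half the double average of the defects between points of \<open>A\<close>, which is nonpositive.
  Finally, in a Hilbert space closed convex sets with the finite intersection property, one of them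
  bounded, have a common point: points of almost minimal norm in a decreasing chain of finite
  intersections form a Cauchy sequence by the parallelogram law.\<close>

section \<open>Points of almost minimal norm in convex sets\<close>

definition inf_sqnorm :: "'a::real_normed_vector set \<Rightarrow> real" where
  "inf_sqnorm C = Inf ((\<lambda>x. (norm x)\<^sup>2) ` C)"

lemma inf_sqnorm_le: "x \<in> C \<Longrightarrow> inf_sqnorm C \<le> (norm x)\<^sup>2"
  unfolding inf_sqnorm_def by (rule cInf_lower) (auto intro: bdd_belowI[of _ 0])

lemma inf_sqnorm_antimono: "C' \<subseteq> C \<Longrightarrow> C' \<noteq> {} \<Longrightarrow> inf_sqnorm C \<le> inf_sqnorm C'"
  unfolding inf_sqnorm_def by (rule cInf_superset_mono) (auto intro: bdd_belowI[of _ 0])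

lemma inf_sqnorm_approx:
  assumes "C \<noteq> {}" and "e > 0"
  shows "\<exists>x\<in>C. (norm x)\<^sup>2 < inf_sqnorm C + e"
proof -
  have "\<exists>v\<in>(\<lambda>x. (norm x)\<^sup>2) ` C. v < inf_sqnorm C + e"
    unfolding inf_sqnorm_def using assms by (intro cInf_lessD) auto
  then show ?thesis
    by blast
qed

lemma near_minimisers_dist:
  fixes x y :: "'a::real_inner"
  assumes "convex D" and "C \<subseteq> D"
    and "x \<in> D" and "(norm x)\<^sup>2 \<le> inf_sqnorm D + e"
    and "y \<in> C" and "(norm y)\<^sup>2 \<le> inf_sqnorm C + e"
    and "inf_sqnorm C \<le> inf_sqnorm D + e"
  shows "dist x y \<le> sqrt (6 * e)"
proof -
  have "(1/2) *\<^sub>R x + (1/2) *\<^sub>R y \<in> D"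
    using assms(1,2,3,5) by (intro convexD) auto
  then have "inf_sqnorm D \<le> (norm ((1/2) *\<^sub>R x + (1/2) *\<^sub>R y))\<^sup>2"
    by (rule inf_sqnorm_le)
  moreover have "(norm (x - y))\<^sup>2
      = 2 * (norm x)\<^sup>2 + 2 * (norm y)\<^sup>2 - 4 * (norm ((1/2) *\<^sub>R x + (1/2) *\<^sub>R y))\<^sup>2"
    unfolding power2_norm_eq_inner
    by (simp add: inner_add_left inner_add_right inner_diff_left inner_diff_right inner_commute
        algebra_simps)
  ultimately have "(norm (x - y))\<^sup>2 \<le> 6 * e"
    using assms(4,6,7) by argo
  then show ?thesis
    unfolding dist_norm by (rule real_le_rsqrt)
qed

lemma directed_decreasing_chain:
  assumes directed: "\<And>C1 C2. C1 \<in> \<C> \<Longrightarrow> C2 \<in> \<C> \<Longrightarrow> \<exists>C\<in>\<C>. C \<subseteq> C1 \<inter> C2"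
    and "\<And>n. Cs n \<in> \<C>"
  obtains D where "\<And>n. D n \<in> \<C>" and "decseq D" and "\<And>n. D n \<subseteq> Cs n"
proof -
  obtain meet where meet:
    "\<And>C1 C2. C1 \<in> \<C> \<Longrightarrow> C2 \<in> \<C> \<Longrightarrow> meet C1 C2 \<in> \<C> \<and> meet C1 C2 \<subseteq> C1 \<inter> C2"
    using directed by metis
  define D where "D = rec_nat (Cs 0) (\<lambda>n Dn. meet Dn (Cs (Suc n)))"
  have D_0: "D 0 = Cs 0" and D_Suc: "D (Suc n) = meet (D n) (Cs (Suc n))" for n
    unfolding D_def by simp_all
  have D_mem: "D n \<in> \<C>" for n
    by (induction n) (simp_all add: D_0 D_Suc meet assms(2))
  moreover have "decseq D"
    using meet[OF D_mem assms(2)] by (intro decseq_SucI) (simp add: D_Suc)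
  moreover have "D n \<subseteq> Cs n" for n
    using meet[OF D_mem assms(2)] by (cases n) (auto simp: D_0 D_Suc)
  ultimately show ?thesis
    using that by blast
qed

lemma directed_minimising_chain:
  assumes "\<C> \<noteq> {}" and ne: "\<And>C. C \<in> \<C> \<Longrightarrow> C \<noteq> {}"
    and directed: "\<And>C1 C2. C1 \<in> \<C> \<Longrightarrow> C2 \<in> \<C> \<Longrightarrow> \<exists>C\<in>\<C>. C \<subseteq> C1 \<inter> C2"
    and bdd: "bdd_above (inf_sqnorm ` \<C>)"
  obtains D where "\<And>n. D n \<in> \<C>" and "decseq D"
    and "\<And>C n. C \<in> \<C> \<Longrightarrow> inf_sqnorm C \<le> inf_sqnorm (D n) + 1 / (real n + 1)"
proof -
  define \<alpha> where "\<alpha> = (SUP C\<in>\<C>. inf_sqnorm C)"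
  have "\<exists>C\<in>\<C>. \<alpha> - 1 / (real n + 1) < inf_sqnorm C" for n
    unfolding \<alpha>_def using bdd \<open>\<C> \<noteq> {}\<close> by (subst less_cSUP_iff[symmetric]) auto
  then obtain Cs where "\<And>n. Cs n \<in> \<C>" and Cs: "\<And>n. \<alpha> - 1 / (real n + 1) < inf_sqnorm (Cs n)"
    by metis
  then obtain D where D: "\<And>n. D n \<in> \<C>" "decseq D" "\<And>n. D n \<subseteq> Cs n"
    using directed_decreasing_chain[OF directed] by metis
  have "inf_sqnorm C \<le> inf_sqnorm (D n) + 1 / (real n + 1)" if "C \<in> \<C>" for C n
  proof -
    have "inf_sqnorm C \<le> \<alpha>"
      unfolding \<alpha>_def using that bdd by (rule cSUP_upper)
    moreover have "inf_sqnorm (Cs n) \<le> inf_sqnorm (D n)"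
      using D(3) ne[OF D(1)] by (rule inf_sqnorm_antimono)
    ultimately show ?thesis
      using Cs[of n] by linarith
  qed
  with D(1,2) that show ?thesis
    by blast
qed

lemma directed_convex_closure_Inter_nonempty:
  fixes \<C> :: "'a::{real_inner, complete_space} set set"
  assumes "\<C> \<noteq> {}" and convex: "\<And>C. C \<in> \<C> \<Longrightarrow> convex C" and ne: "\<And>C. C \<in> \<C> \<Longrightarrow> C \<noteq> {}"
    and directed: "\<And>C1 C2. C1 \<in> \<C> \<Longrightarrow> C2 \<in> \<C> \<Longrightarrow> \<exists>C\<in>\<C>. C \<subseteq> C1 \<inter> C2"
    and bdd: "bdd_above (inf_sqnorm ` \<C>)"
  shows "\<exists>L. \<forall>C\<in>\<C>. L \<in> closure C"
proof -
  obtain D where D: "\<And>n. D n \<in> \<C>" "decseq D"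
    and D_min: "\<And>C n. C \<in> \<C> \<Longrightarrow> inf_sqnorm C \<le> inf_sqnorm (D n) + 1 / (real n + 1)"
    using directed_minimising_chain[OF assms(1) ne directed bdd] by blast
  have "\<exists>x\<in>C. (norm x)\<^sup>2 < inf_sqnorm C + 1 / (real n + 1)" if "C \<in> \<C>" for C and n :: nat
    using inf_sqnorm_approx[OF ne[OF that]] by simp
  then obtain pick where pick: "\<And>C n. C \<in> \<C> \<Longrightarrow> pick C n \<in> C"
    "\<And>C n. C \<in> \<C> \<Longrightarrow> (norm (pick C n))\<^sup>2 < inf_sqnorm C + 1 / (real n + 1)"
    by metis
  define p where "p n = pick (D n) n" for n
  have close: "dist (p n) (pick C m) \<le> sqrt (6 * (1 / (real n + 1)))"
    if "C \<in> \<C>" and "C \<subseteq> D n" and "n \<le> m" for n m C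
  proof (rule near_minimisers_dist[OF convex[OF D(1)] \<open>C \<subseteq> D n\<close>])
    show "p n \<in> D n" "(norm (p n))\<^sup>2 \<le> inf_sqnorm (D n) + 1 / (real n + 1)"
      unfolding p_def using pick[OF D(1)] by (auto intro: less_imp_le)
    have "1 / (real m + 1) \<le> 1 / (real n + 1)"
      using \<open>n \<le> m\<close> by (simp add: frac_le)
    then show "pick C m \<in> C" "(norm (pick C m))\<^sup>2 \<le> inf_sqnorm C + 1 / (real n + 1)"
      using pick[OF \<open>C \<in> \<C>\<close>, of m] by auto
  qed (use D_min \<open>C \<in> \<C>\<close> in blast)
  have bound_null: "(\<lambda>n. sqrt (6 * (1 / (real n + 1)))) \<longlonglongrightarrow> 0"
    by real_asymp
  have "Cauchy p"
  proof (rule metric_CauchyI)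
    fix e :: real
    assume "e > 0"
    then have "\<forall>\<^sub>F n in sequentially. sqrt (6 * (1 / (real n + 1))) < e / 2"
      by (intro order_tendstoD(2)[OF bound_null]) simp
    then obtain N where "sqrt (6 * (1 / (real N + 1))) < e / 2"
      unfolding eventually_sequentially by blast
    then have "dist (p N) (p n) < e / 2" if "N \<le> n" for n
      using close[OF D(1) decseqD[OF D(2) that] that] unfolding p_def by simp
    then show "\<exists>M. \<forall>m\<ge>M. \<forall>n\<ge>M. dist (p m) (p n) < e"
      by (metis dist_commute dist_triangle_half_r)
  qed
  then obtain L where "p \<longlonglongrightarrow> L"
    using Cauchy_convergent_iff convergent_def by blast
  have "L \<in> closure C" if C: "C \<in> \<C>" for C
  proof -
    have "\<forall>n. \<exists>C'\<in>\<C>. C' \<subseteq> C \<inter> D n"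
      using directed[OF C D(1)] by blast
    then obtain C' where C': "\<And>n. C' n \<in> \<C>" "\<And>n. C' n \<subseteq> C \<inter> D n"
      by metis
    define q where "q n = pick (C' n) n" for n
    have "norm (q n - p n) \<le> sqrt (6 * (1 / (real n + 1)))" for n
      using close[OF C'(1), of n n] C'(2) unfolding q_def by (simp add: dist_norm norm_minus_commute)
    then have "(\<lambda>n. q n - p n) \<longlonglongrightarrow> 0"
      by (intro Lim_null_comparison[OF _ bound_null] always_eventually) auto
    then have "q \<longlonglongrightarrow> L"
      by (rule Lim_transform[OF \<open>p \<longlonglongrightarrow> L\<close>])
    moreover have "q n \<in> C" for n
      using pick(1)[OF C'(1)] C'(2) unfolding q_def by blast
    ultimately show ?thesis
      unfolding closure_sequential by blast
  qed
  then show ?thesis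
    by blast
qed

text \<open>In a Hilbert space this replaces the weak compactness of bounded closed convex sets.\<close>

lemma Inter_closed_convex_nonempty:
  fixes K :: "'i \<Rightarrow> 'a::{real_inner, complete_space} set"
  assumes closed: "\<And>i. i \<in> I \<Longrightarrow> closed (K i)" and convex: "\<And>i. i \<in> I \<Longrightarrow> convex (K i)"
    and fip: "\<And>F. finite F \<Longrightarrow> F \<subseteq> I \<Longrightarrow> (\<Inter>i\<in>F. K i) \<noteq> {}"
    and "j \<in> I" and "bounded (K j)"
  shows "\<exists>x. \<forall>i\<in>I. x \<in> K i"
proof -
  define \<C> where "\<C> = {\<Inter>i\<in>F. K i | F. finite F \<and> F \<subseteq> I}"
  obtain M where M: "\<And>x. x \<in> K j \<Longrightarrow> norm x \<le> M"
    using \<open>bounded (K j)\<close> unfolding bounded_iff by blast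
  have bound: "inf_sqnorm C \<le> M\<^sup>2" if C: "C \<in> \<C>" for C
  proof -
    obtain F where F: "finite F" "F \<subseteq> I" "C = (\<Inter>i\<in>F. K i)"
      using C unfolding \<C>_def by (auto simp only: mem_Collect_eq)
    have "(\<Inter>i\<in>insert j F. K i) \<noteq> {}"
      by (intro fip) (use F(1,2) \<open>j \<in> I\<close> in auto)
    then obtain x where x: "x \<in> (\<Inter>i\<in>insert j F. K i)"
      by blast
    have "inf_sqnorm C \<le> inf_sqnorm (\<Inter>i\<in>insert j F. K i)"
      using F(3) x by (intro inf_sqnorm_antimono) auto
    also have "\<dots> \<le> (norm x)\<^sup>2"
      using x by (rule inf_sqnorm_le)
    also have "\<dots> \<le> M\<^sup>2"
      using M x by (simp add: power_mono)
    finally show ?thesis .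
  qed
  have "(\<Inter>i\<in>{}. K i) \<in> \<C>"
    unfolding \<C>_def by (intro CollectI exI[of _ "{}"]) simp
  then have "\<C> \<noteq> {}"
    by blast
  moreover have "convex C" "C \<noteq> {}" if C: "C \<in> \<C>" for C
  proof -
    obtain F where "finite F" "F \<subseteq> I" "C = (\<Inter>i\<in>F. K i)"
      using C unfolding \<C>_def by (auto simp only: mem_Collect_eq)
    then show "convex C" "C \<noteq> {}"
      using convex fip by (auto intro!: convex_INT)
  qed
  moreover have "\<exists>C\<in>\<C>. C \<subseteq> C1 \<inter> C2" if C12: "C1 \<in> \<C>" "C2 \<in> \<C>" for C1 C2
  proof -
    obtain F1 F2 where "finite F1" "F1 \<subseteq> I" "C1 = (\<Inter>i\<in>F1. K i)"
      and "finite F2" "F2 \<subseteq> I" "C2 = (\<Inter>i\<in>F2. K i)"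
      using C12 unfolding \<C>_def by (auto simp only: mem_Collect_eq)
    then have "(\<Inter>i\<in>F1 \<union> F2. K i) \<in> \<C>" and "(\<Inter>i\<in>F1 \<union> F2. K i) \<subseteq> C1 \<inter> C2"
      unfolding \<C>_def by blast+
    then show ?thesis ..
  qed
  moreover have "bdd_above (inf_sqnorm ` \<C>)"
    using bound by (intro bdd_aboveI[of _ "M\<^sup>2"]) auto
  ultimately have "\<exists>L. \<forall>C\<in>\<C>. L \<in> closure C"
    by (rule directed_convex_closure_Inter_nonempty)
  then obtain L where L: "\<forall>C\<in>\<C>. L \<in> closure C"
    by blast
  have "L \<in> K i" if "i \<in> I" for i
  proof -
    have "K i \<in> \<C>"
      unfolding \<C>_def using that by (intro CollectI exI[of _ "{i}"]) simp
    then show ?thesis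
      using L closed[OF that] closure_closed by blast
  qed
  then show ?thesis
    by blast
qed

section \<open>A minimax lemma for quadratic functions\<close>

text \<open>A pair \<open>w = (a, c)\<close> encodes the function \<open>p \<mapsto> s \<parallel>p\<parallel>\<^sup>2 + \<langle>a, p\<rangle> + c\<close>; for \<open>s > 0\<close> its minimum
  value is \<^term>\<open>quadratic_min s w\<close>, attained at \<open>p = - a / (2 s)\<close>. The minimax argument
  exploits that the former is affine and the latter concave in \<open>w\<close>.\<close>

definition quadratic_fn :: "real \<Rightarrow> 'a::real_inner \<times> real \<Rightarrow> 'a \<Rightarrow> real" where
  "quadratic_fn s w p = s * (norm p)\<^sup>2 + inner (fst w) p + snd w"

definition quadratic_min :: "real \<Rightarrow> 'a::real_inner \<times> real \<Rightarrow> real" where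
  "quadratic_min s w = snd w - (norm (fst w))\<^sup>2 / (4 * s)"

lemma quadratic_min_le:
  assumes "s > 0"
  shows "quadratic_min s w \<le> quadratic_fn s w p"
proof -
  have "0 \<le> s * (norm (p + (1 / (2 * s)) *\<^sub>R fst w))\<^sup>2"
    using assms by simp
  also have "\<dots> = quadratic_fn s w p - quadratic_min s w"
    using assms unfolding quadratic_fn_def quadratic_min_def
    by (simp add: power2_norm_eq_inner inner_add_left inner_add_right inner_commute field_simps)
  finally show ?thesis
    by simp
qed

lemma quadratic_fn_convex_combination:
  assumes "sum l S = 1"
  shows "(\<Sum>i\<in>S. l i * quadratic_fn s (w i) p) = quadratic_fn s (\<Sum>i\<in>S. l i *\<^sub>R w i) p"
  using assms
  by (simp add: quadratic_fn_def fst_sum snd_sum inner_sum_left distrib_left sum.distrib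
      flip: sum_distrib_right)

lemma quadratic_min_segment:
  fixes w w' :: "'a::real_inner \<times> real"
  assumes "s > 0"
  defines "p \<equiv> - (1 / (2 * s)) *\<^sub>R fst w"
  shows "quadratic_min s ((1 - t) *\<^sub>R w + t *\<^sub>R w')
    = quadratic_min s w + t * (quadratic_fn s w' p - quadratic_min s w)
      - t\<^sup>2 * (norm (fst w' - fst w))\<^sup>2 / (4 * s)"
proof -
  obtain a c a' c' where w: "w = (a, c)" and w': "w' = (a', c')"
    by fastforce
  have comb: "(1 - t) *\<^sub>R w + t *\<^sub>R w' = (a + t *\<^sub>R (a' - a), c + t * (c' - c))"
    unfolding w w' by (simp add: algebra_simps)
  have norm_comb: "(norm (a + t *\<^sub>R (a' - a)))\<^sup>2
      = (norm a)\<^sup>2 + 2 * t * (inner a a' - (norm a)\<^sup>2) + t\<^sup>2 * (norm (a' - a))\<^sup>2"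
    unfolding power2_norm_eq_inner
    by (simp add: inner_add_left inner_add_right inner_diff_left inner_diff_right inner_commute
        algebra_simps power2_eq_square)
  have norm_p: "(norm p)\<^sup>2 = (norm a)\<^sup>2 / (4 * s\<^sup>2)" and inner_p: "inner a' p = - inner a a' / (2 * s)"
    unfolding p_def w using assms by (simp_all add: power_divide power2_eq_square inner_commute)
  show ?thesis
    using assms unfolding comb
    unfolding quadratic_fn_def quadratic_min_def w w' fst_conv snd_conv norm_comb norm_p inner_p
    by (simp add: field_simps power2_eq_square)
qed

lemma nonpos_if_linear_dominated_by_quadratic:
  fixes D K :: real
  assumes "\<And>t. 0 < t \<Longrightarrow> t \<le> 1 \<Longrightarrow> t * D \<le> t\<^sup>2 * K"
  shows "D \<le> 0"
proof (rule ccontr)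
  assume "\<not> D \<le> 0"
  define t where "t = min 1 (D / (2 * \<bar>K\<bar> + 1))"
  have t: "0 < t" "t \<le> 1"
    using \<open>\<not> D \<le> 0\<close> unfolding t_def by auto
  have "t * K \<le> t * \<bar>K\<bar>"
    using t(1) by (simp add: mult_left_mono)
  also have "\<dots> \<le> D / (2 * \<bar>K\<bar> + 1) * \<bar>K\<bar>"
    unfolding t_def by (intro mult_right_mono) auto
  also have "\<dots> < D"
    using \<open>\<not> D \<le> 0\<close> by (simp add: field_simps add_pos_nonneg)
  finally have "t\<^sup>2 * K < t * D"
    using t(1) by (simp add: power2_eq_square mult.assoc)
  with assms[OF t] show False
    by linarith
qed

lemma quadratic_fn_le_max_quadratic_min:
  assumes "s > 0" and "convex H" and "w0 \<in> H" and "w \<in> H"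
    and max: "\<And>w'. w' \<in> H \<Longrightarrow> quadratic_min s w' \<le> quadratic_min s w0"
  shows "quadratic_fn s w (- (1 / (2 * s)) *\<^sub>R fst w0) \<le> quadratic_min s w0"
proof -
  have "t * (quadratic_fn s w (- (1 / (2 * s)) *\<^sub>R fst w0) - quadratic_min s w0)
      \<le> t\<^sup>2 * ((norm (fst w - fst w0))\<^sup>2 / (4 * s))" if "0 < t" "t \<le> 1" for t
  proof -
    have "(1 - t) *\<^sub>R w0 + t *\<^sub>R w \<in> H"
      using assms(2-4) that convexD_alt[of H] by simp
    then have "quadratic_min s ((1 - t) *\<^sub>R w0 + t *\<^sub>R w) \<le> quadratic_min s w0"
      by (rule max)
    then show ?thesis
      unfolding quadratic_min_segment[OF assms(1)] by simp
  qed
  then have "quadratic_fn s w (- (1 / (2 * s)) *\<^sub>R fst w0) - quadratic_min s w0 \<le> 0"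
    by (rule nonpos_if_linear_dominated_by_quadratic)
  then show ?thesis
    by simp
qed

lemma convex_hull_finite_image:
  fixes f :: "'i \<Rightarrow> 'a::real_vector"
  assumes "finite S" and "x \<in> convex hull (f ` S)"
  obtains l where "\<forall>i\<in>S. 0 \<le> l i" and "sum l S = 1" and "x = (\<Sum>i\<in>S. l i *\<^sub>R f i)"
proof -
  define R where "R = {\<Sum>i\<in>S. l i *\<^sub>R f i | l. (\<forall>i\<in>S. 0 \<le> l i) \<and> sum l S = 1}"
  have "f i \<in> R" if "i \<in> S" for i
  proof -
    have "(\<Sum>j\<in>S. (if i = j then 1 else 0) *\<^sub>R f j) = f i"
      and "sum (\<lambda>j. if i = j then 1 else 0) S = (1::real)"
      using assms(1) that
      by (simp_all add: sum.delta sum.cong[of S S "\<lambda>j. (if i = j then 1 else 0) *\<^sub>R f j"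
            "\<lambda>j. if i = j then f j else 0"])
    then show ?thesis
      unfolding R_def by (intro CollectI exI[of _ "\<lambda>j. if i = j then 1 else 0"]) auto
  qed
  moreover have "convex R"
  proof (rule convexI)
    fix u v :: real and a b
    assume "a \<in> R" "b \<in> R" "0 \<le> u" "0 \<le> v" "u + v = 1"
    then obtain la lb where
      "\<forall>i\<in>S. 0 \<le> la i" "sum la S = 1" "a = (\<Sum>i\<in>S. la i *\<^sub>R f i)"
      "\<forall>i\<in>S. 0 \<le> lb i" "sum lb S = 1" "b = (\<Sum>i\<in>S. lb i *\<^sub>R f i)"
      unfolding R_def by blast
    with \<open>0 \<le> u\<close> \<open>0 \<le> v\<close> \<open>u + v = 1\<close> show "u *\<^sub>R a + v *\<^sub>R b \<in> R"
      unfolding R_def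
      by (intro CollectI exI[of _ "\<lambda>i. u * la i + v * lb i"])
        (simp add: sum.distrib scaleR_add_left scaleR_sum_right flip: sum_distrib_left)
  qed
  ultimately have "convex hull (f ` S) \<subseteq> R"
    by (intro hull_minimal) auto
  with assms(2) that show ?thesis
    unfolding R_def by blast
qed

text \<open>The maximiser \<open>w0\<close> of the concave function \<^const>\<open>quadratic_min\<close> over the convex hull of the
  \<open>w i\<close> yields the common point: its value is \<open>\<le> 0\<close> by hypothesis, and by first-order optimality
  the minimiser of \<open>quadratic_fn s w0\<close> makes every \<open>quadratic_fn s (w i)\<close> at most that value.\<close>

lemma quadratic_minimax:
  fixes w :: "'i \<Rightarrow> 'a::real_inner \<times> real"
  assumes "s > 0" and "finite S"
    and avg: "\<And>l. \<forall>i\<in>S. 0 \<le> l i \<Longrightarrow> sum l S = 1 \<Longrightarrow>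
                  \<exists>p. (\<Sum>i\<in>S. l i * quadratic_fn s (w i) p) \<le> 0"
  shows "\<exists>p. \<forall>i\<in>S. quadratic_fn s (w i) p \<le> 0"
proof (cases "S = {}")
  case False
  define H where "H = convex hull (w ` S)"
  have "compact H" and "H \<noteq> {}"
    unfolding H_def using assms(2) False by (simp_all add: finite_imp_compact_convex_hull)
  moreover have "continuous_on H (quadratic_min s)"
    unfolding quadratic_min_def by (intro continuous_intros) (use assms(1) in auto)
  ultimately obtain w0 where "w0 \<in> H"
    and w0_max: "\<And>w'. w' \<in> H \<Longrightarrow> quadratic_min s w' \<le> quadratic_min s w0"
    using continuous_attains_sup by metis
  have "quadratic_min s w0 \<le> 0"
  proof -
    obtain l where l: "\<forall>i\<in>S. 0 \<le> l i" "sum l S = 1" "w0 = (\<Sum>i\<in>S. l i *\<^sub>R w i)"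
      using convex_hull_finite_image[OF assms(2)] \<open>w0 \<in> H\<close> unfolding H_def by metis
    then obtain p where "(\<Sum>i\<in>S. l i * quadratic_fn s (w i) p) \<le> 0"
      using avg by blast
    moreover have "quadratic_fn s w0 p = (\<Sum>i\<in>S. l i * quadratic_fn s (w i) p)"
      unfolding l(3) by (rule quadratic_fn_convex_combination[OF l(2), symmetric])
    ultimately show ?thesis
      using quadratic_min_le[OF assms(1), of w0 p] by simp
  qed
  moreover have "quadratic_fn s (w i) (- (1 / (2 * s)) *\<^sub>R fst w0) \<le> quadratic_min s w0"
    if "i \<in> S" for i
    using assms(1) convex_convex_hull \<open>w0 \<in> H\<close> hull_inc[OF imageI[OF that]] w0_max
    unfolding H_def by (rule quadratic_fn_le_max_quadratic_min)
  ultimately show ?thesis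
    by (meson order_trans)
qed simp

lemma convex_quadratic_fn_sublevel:
  assumes "s \<ge> 0"
  shows "convex {p. quadratic_fn s w p \<le> 0}"
proof (rule convexI)
  fix p q :: 'a and u v :: real
  assume p: "p \<in> {p. quadratic_fn s w p \<le> 0}" and q: "q \<in> {p. quadratic_fn s w p \<le> 0}"
    and "0 \<le> u" "0 \<le> v" "u + v = 1"
  have v: "v = 1 - u"
    using \<open>u + v = 1\<close> by simp
  have norm_comb: "(norm (u *\<^sub>R p + v *\<^sub>R q))\<^sup>2
      = u * (norm p)\<^sup>2 + v * (norm q)\<^sup>2 - u * v * (norm (p - q))\<^sup>2"
    unfolding power2_norm_eq_inner v
    by (simp add: inner_add_left inner_add_right inner_diff_left inner_diff_right inner_commute
        algebra_simps)
  have "quadratic_fn s w (u *\<^sub>R p + v *\<^sub>R q)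
      = u * quadratic_fn s w p + v * quadratic_fn s w q - s * (u * v * (norm (p - q))\<^sup>2)"
    unfolding quadratic_fn_def inner_add_right inner_scaleR_right norm_comb
    by (simp add: v algebra_simps)
  also have "\<dots> \<le> 0"
  proof -
    have "u * quadratic_fn s w p \<le> 0" "v * quadratic_fn s w q \<le> 0"
      using p q \<open>0 \<le> u\<close> \<open>0 \<le> v\<close> by (simp_all add: mult_nonneg_nonpos)
    moreover have "0 \<le> s * (u * v * (norm (p - q))\<^sup>2)"
      using assms \<open>0 \<le> u\<close> \<open>0 \<le> v\<close> by simp
    ultimately show ?thesis
      by linarith
  qed
  finally show "u *\<^sub>R p + v *\<^sub>R q \<in> {p. quadratic_fn s w p \<le> 0}"
    by simp
qed

lemma bounded_quadratic_fn_sublevel: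
  assumes "s > 0"
  shows "bounded {p. quadratic_fn s w p \<le> 0}"
  unfolding bounded_iff
proof (intro exI ballI)
  fix p
  assume "p \<in> {p. quadratic_fn s w p \<le> 0}"
  moreover have "- inner (fst w) p \<le> norm (fst w) * norm p"
    using Cauchy_Schwarz_ineq2[of "fst w" p] by (simp add: abs_le_iff)
  ultimately have quadratic_bound: "s * (norm p)\<^sup>2 \<le> norm (fst w) * norm p + \<bar>snd w\<bar>"
    unfolding quadratic_fn_def using abs_ge_minus_self[of "snd w"] by simp
  show "norm p \<le> max 1 ((norm (fst w) + \<bar>snd w\<bar>) / s)"
  proof (cases "norm p \<le> 1")
    case False
    then have "s * norm p * norm p \<le> (norm (fst w) + \<bar>snd w\<bar>) * norm p"
      using quadratic_bound mult_left_mono[of 1 "norm p" "\<bar>snd w\<bar>"]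
      by (simp add: power2_eq_square algebra_simps)
    then have "s * norm p \<le> norm (fst w) + \<bar>snd w\<bar>"
      by (rule mult_right_le_imp_le) (use False in linarith)
    then have "norm p \<le> (norm (fst w) + \<bar>snd w\<bar>) / s"
      using assms by (simp add: field_simps)
    then show ?thesis
      by simp
  qed simp
qed

lemma closed_quadratic_fn_sublevel: "closed {p. quadratic_fn s w p \<le> 0}"
  unfolding quadratic_fn_def by (intro closed_Collect_le continuous_intros)

section \<open>Comonotone operators\<close>

definition comonotone_defect :: "real \<Rightarrow> 'a::real_inner \<times> 'a \<Rightarrow> 'a \<times> 'a \<Rightarrow> real" where
  "comonotone_defect \<rho> g h =
     \<rho> * (norm (snd g - snd h))\<^sup>2 - inner (fst g - fst h) (snd g - snd h)"

lemma comonotone_iff_defect: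
  "comonotone \<rho> A \<longleftrightarrow> (\<forall>g\<in>A. \<forall>h\<in>A. comonotone_defect \<rho> g h \<le> 0)"
  unfolding comonotone_def comonotone_defect_def by fastforce

lemma comonotone_defect_commute: "comonotone_defect \<rho> g h = comonotone_defect \<rho> h g"
  unfolding comonotone_defect_def
  by (simp add: norm_minus_commute inner_diff_left inner_diff_right inner_commute)

lemma comonotone_insert:
  assumes "comonotone \<rho> A" and "\<forall>g\<in>A. comonotone_defect \<rho> a g \<le> 0"
  shows "comonotone \<rho> (insert a A)"
proof -
  have "comonotone_defect \<rho> g a \<le> 0" if "g \<in> A" for g
    using assms(2) that comonotone_defect_commute by metis
  with assms show ?thesis
    unfolding comonotone_iff_defect by (auto simp: comonotone_defect_def)
qed

text \<open>\<^const>\<open>comonotone_defect\<close> evaluates the quadratic form \<open>(x, u) \<mapsto> \<rho> \<parallel>u\<parallel>\<^sup>2 - \<langle>x, u\<rangle>\<close> at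
  \<open>g - h\<close>, so this is Huygens' parallel-axis identity for the barycentre \<open>B\<close>.\<close>

lemma sum_comonotone_defect_barycentre:
  fixes S :: "('a::real_inner \<times> 'a) set"
  assumes "sum l S = 1"
  defines "B \<equiv> (\<Sum>h\<in>S. l h *\<^sub>R h)"
  shows "(\<Sum>h\<in>S. l h * comonotone_defect \<rho> g h)
           = comonotone_defect \<rho> g B + (\<Sum>h\<in>S. l h * comonotone_defect \<rho> B h)"
proof -
  obtain x u Y V where g: "g = (x, u)" and B: "B = (Y, V)"
    by fastforce
  define c where "c = (2 * \<rho>) *\<^sub>R (u - V) - (x - Y)"
  have split: "comonotone_defect \<rho> g h = comonotone_defect \<rho> g B + comonotone_defect \<rho> B h
      + inner c (V - snd h) - inner (Y - fst h) (u - V)" for h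
    unfolding g B c_def comonotone_defect_def power2_norm_eq_inner
    by (simp add: inner_diff_left inner_diff_right inner_commute algebra_simps)
  have "(\<Sum>h\<in>S. l h *\<^sub>R (B - h)) = 0"
    using assms by (simp add: scaleR_right_diff_distrib sum_subtractf flip: scaleR_sum_left)
  then have "fst (\<Sum>h\<in>S. l h *\<^sub>R (B - h)) = 0" and "snd (\<Sum>h\<in>S. l h *\<^sub>R (B - h)) = 0"
    by simp_all
  then have centred: "(\<Sum>h\<in>S. l h *\<^sub>R (V - snd h)) = 0" "(\<Sum>h\<in>S. l h *\<^sub>R (Y - fst h)) = 0"
    unfolding B by (simp_all add: fst_sum snd_sum)
  have "(\<Sum>h\<in>S. l h * comonotone_defect \<rho> g h)
      = (\<Sum>h\<in>S. l h * comonotone_defect \<rho> g B + l h * comonotone_defect \<rho> B h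
          + inner c (l h *\<^sub>R (V - snd h)) - inner (l h *\<^sub>R (Y - fst h)) (u - V))"
  proof (rule sum.cong[OF refl])
    fix h
    show "l h * comonotone_defect \<rho> g h = l h * comonotone_defect \<rho> g B + l h * comonotone_defect \<rho> B h
        + inner c (l h *\<^sub>R (V - snd h)) - inner (l h *\<^sub>R (Y - fst h)) (u - V)"
      unfolding split[of h] by (simp add: algebra_simps)
  qed
  also have "\<dots> = sum l S * comonotone_defect \<rho> g B + (\<Sum>h\<in>S. l h * comonotone_defect \<rho> B h)
      + inner c (\<Sum>h\<in>S. l h *\<^sub>R (V - snd h)) - inner (\<Sum>h\<in>S. l h *\<^sub>R (Y - fst h)) (u - V)"
    by (simp add: sum.distrib sum_subtractf inner_sum_left inner_sum_right flip: sum_distrib_right)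
  finally show ?thesis
    using centred assms(1) by simp
qed

lemma comonotone_weighted_defect_nonpos:
  fixes A :: "('a::real_inner \<times> 'a) set"
  assumes "comonotone \<rho> A" and "S \<subseteq> A" and "\<forall>h\<in>S. 0 \<le> l h" and "sum l S = 1"
  defines "V \<equiv> (\<Sum>h\<in>S. l h *\<^sub>R snd h)"
  shows "(\<Sum>h\<in>S. l h * comonotone_defect \<rho> (z - V, V) h) \<le> 0"
proof -
  define B where "B = (\<Sum>h\<in>S. l h *\<^sub>R h)"
  define \<Phi> where "\<Phi> = (\<Sum>h\<in>S. l h * comonotone_defect \<rho> B h)"
  have row: "(\<Sum>h\<in>S. l h * comonotone_defect \<rho> g h) = comonotone_defect \<rho> g B + \<Phi>" for g
    unfolding \<Phi>_def B_def by (rule sum_comonotone_defect_barycentre[OF assms(4)])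
  have "snd B = V"
    unfolding B_def V_def by (simp add: snd_sum)
  then have weighted: "(\<Sum>h\<in>S. l h * comonotone_defect \<rho> (z - V, V) h) = \<Phi>"
    using row[of "(z - V, V)"] by (simp add: comonotone_defect_def)
  have col: "(\<Sum>g\<in>S. l g * comonotone_defect \<rho> g B) = \<Phi>"
    unfolding \<Phi>_def by (simp only: comonotone_defect_commute[of \<rho> B])
  have "2 * \<Phi> = (\<Sum>g\<in>S. l g * comonotone_defect \<rho> g B) + sum l S * \<Phi>"
    using assms(4) col by simp
  also have "\<dots> = (\<Sum>g\<in>S. l g * (\<Sum>h\<in>S. l h * comonotone_defect \<rho> g h))"
    by (simp add: row distrib_left sum.distrib sum_distrib_right)
  also have "\<dots> \<le> 0"
    using assms(1-3) unfolding comonotone_iff_defect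
    by (auto intro!: sum_nonpos mult_nonneg_nonpos)
  finally show ?thesis
    using weighted by simp
qed

definition comonotone_defect_coeffs :: "real \<Rightarrow> 'a::real_inner \<Rightarrow> 'a \<times> 'a \<Rightarrow> 'a \<times> real" where
  "comonotone_defect_coeffs \<rho> z g =
     (fst g - z - (1 + 2 * \<rho>) *\<^sub>R snd g, \<rho> * (norm (snd g))\<^sup>2 + inner (z - fst g) (snd g))"

lemma comonotone_defect_eq_quadratic_fn:
  "comonotone_defect \<rho> (z - p, p) g = quadratic_fn (1 + \<rho>) (comonotone_defect_coeffs \<rho> z g) p"
  unfolding comonotone_defect_def quadratic_fn_def comonotone_defect_coeffs_def power2_norm_eq_inner
  by (simp add: inner_diff_left inner_diff_right inner_commute algebra_simps)

lemma comonotone_defect_sublevel: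
  fixes z :: "'a::real_inner"
  assumes "\<rho> > -1"
  shows "closed {p. comonotone_defect \<rho> (z - p, p) g \<le> 0}"
    and "convex {p. comonotone_defect \<rho> (z - p, p) g \<le> 0}"
    and "bounded {p. comonotone_defect \<rho> (z - p, p) g \<le> 0}"
  unfolding comonotone_defect_eq_quadratic_fn using assms
  by (simp_all add: closed_quadratic_fn_sublevel convex_quadratic_fn_sublevel
      bounded_quadratic_fn_sublevel)

lemma comonotone_finite_extension:
  fixes A :: "('a::real_inner \<times> 'a) set"
  assumes "comonotone \<rho> A" and "\<rho> > -1" and "finite S" and "S \<subseteq> A"
  shows "\<exists>p. \<forall>g\<in>S. comonotone_defect \<rho> (z - p, p) g \<le> 0"
proof -
  have "\<exists>p. (\<Sum>g\<in>S. l g * quadratic_fn (1 + \<rho>) (comonotone_defect_coeffs \<rho> z g) p) \<le> 0"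
    if "\<forall>g\<in>S. 0 \<le> l g" and "sum l S = 1" for l
    using comonotone_weighted_defect_nonpos[OF assms(1,4) that, of z]
    unfolding comonotone_defect_eq_quadratic_fn by blast
  then have "\<exists>p. \<forall>g\<in>S. quadratic_fn (1 + \<rho>) (comonotone_defect_coeffs \<rho> z g) p \<le> 0"
    using assms(2,3) by (intro quadratic_minimax) auto
  then show ?thesis
    unfolding comonotone_defect_eq_quadratic_fn .
qed

theorem proposition2p9:
  fixes A :: "('a::{real_inner, complete_space} \<times> 'a) set" and \<rho> :: real
  assumes "\<rho> > -1" and "max_comonotone \<rho> A"
  shows "ran_id_plus (inv_op A) = UNIV"
proof -
  have com: "comonotone \<rho> A" and max: "\<And>B. comonotone \<rho> B \<Longrightarrow> A \<subseteq> B \<Longrightarrow> B = A"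
    using assms(2) unfolding max_comonotone_def by auto
  have "comonotone \<rho> {(0::'a, 0)}"
    unfolding comonotone_def by simp
  then obtain g0 where "g0 \<in> A"
    using max[of "{(0, 0)}"] by blast
  have "z \<in> ran_id_plus (inv_op A)" for z
  proof -
    define K where "K g = {p. comonotone_defect \<rho> (z - p, p) g \<le> 0}" for g
    have "(\<Inter>g\<in>F. K g) \<noteq> {}" if "finite F" and "F \<subseteq> A" for F
      using comonotone_finite_extension[OF com assms(1) that] unfolding K_def by blast
    then have "\<exists>p. \<forall>g\<in>A. p \<in> K g"
      using \<open>g0 \<in> A\<close> comonotone_defect_sublevel[OF assms(1)]
      by (intro Inter_closed_convex_nonempty[where j = g0]) (simp_all add: K_def)
    then obtain p where "\<forall>g\<in>A. comonotone_defect \<rho> (z - p, p) g \<le> 0"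
      unfolding K_def by blast
    then have "comonotone \<rho> (insert (z - p, p) A)"
      by (rule comonotone_insert[OF com])
    then have "(p, z - p) \<in> inv_op A"
      using max[of "insert (z - p, p) A"] unfolding inv_op_def by blast
    then show ?thesis
      unfolding ran_id_plus_def by (intro CollectI exI[of _ p] exI[of _ "z - p"]) simp
  qed
  then show ?thesis
    by blast
qed

end
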